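(* Let $U$ be a unitary on $\mathbb C^2\otimes\mathbb C^2$, $\alpha$ a full-rank density operator on $\mathbb C^2$ and $|\beta\rangle\in\mathbb C^2$ a unit vector. If there exist density operators $\alpha',\beta'$ on $\mathbb C^2$ with $U(\alpha\otimes|\beta\rangle\langle\beta|)U^\dagger=\alpha'\otimes\beta'$, then $U$ is a generalized thermal unitary.
   Context: A unitary $U$ on $\mathcal H_A\otimes\mathcal H_B$ is a generalized thermal unitary if there exist Hermitian operators $H_A,H_A'$ on $\mathcal H_A$ and $H_B,H_B'$ on $\mathcal H_B$, with at least one of $H_A,H_B$ not proportional to the identity, such that $U(H_A\otimes\mathbb 1+\mathbb 1\otimes H_B)U^\dagger=H_A'\otimes\mathbb 1+\mathbb 1\otimes H_B'$. *)

theory Defs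
  imports "HOL-Analysis.Analysis"
begin

text \<open>Operators on C^n are represented as complex^'n^'n (finite index type 'n);
  C^2 uses index type 2, and C^2 (x) C^2 uses index type 2 \<times> 2.\<close>

definition adj :: "complex^'n^'m \<Rightarrow> complex^'m^'n" where
  "adj A = (\<chi> i j. cnj (A $ j $ i))"

definition unitary_op :: "complex^'n^'n \<Rightarrow> bool" where
  "unitary_op U \<longleftrightarrow> U ** adj U = mat 1 \<and> adj U ** U = mat 1"

definition hermitian_op :: "complex^'n^'n \<Rightarrow> bool" where
  "hermitian_op A \<longleftrightarrow> adj A = A"

definition psd_op :: "complex^'n^'n \<Rightarrow> bool" where
  "psd_op A \<longleftrightarrow> (\<forall>v::complex^'n.
     Im (\<Sum>i\<in>UNIV. \<Sum>j\<in>UNIV. cnj (v $ i) * A $ i $ j * v $ j) = 0 \<and>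
     0 \<le> Re (\<Sum>i\<in>UNIV. \<Sum>j\<in>UNIV. cnj (v $ i) * A $ i $ j * v $ j))"

definition density_op :: "complex^'n^'n \<Rightarrow> bool" where
  "density_op A \<longleftrightarrow> hermitian_op A \<and> psd_op A \<and> trace A = 1"

definition full_rank :: "complex^'n^'n \<Rightarrow> bool" where
  "full_rank A \<longleftrightarrow> invertible A"

definition unit_vec :: "complex^'n \<Rightarrow> bool" where
  "unit_vec v \<longleftrightarrow> (\<Sum>i\<in>UNIV. (cmod (v $ i))^2) = 1"

definition ket_bra :: "complex^'n \<Rightarrow> complex^'n^'n" where
  "ket_bra v = (\<chi> i j. v $ i * cnj (v $ j))"

definition tensor :: "complex^'a^'a \<Rightarrow> complex^'b^'b \<Rightarrow> complex^('a \<times> 'b)^('a \<times> 'b)" where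
  "tensor A B = (\<chi> p q. A $ fst p $ fst q * B $ snd p $ snd q)"

definition gen_thermal_unitary :: "complex^('a::finite \<times> 'b::finite)^('a \<times> 'b) \<Rightarrow> bool" where
  "gen_thermal_unitary U \<longleftrightarrow> unitary_op U \<and>
    (\<exists>(HA::complex^'a^'a) HA' (HB::complex^'b^'b) HB'.
       hermitian_op HA \<and> hermitian_op HA' \<and> hermitian_op HB \<and> hermitian_op HB' \<and>
       ((\<nexists>c. HA = mat c) \<or> (\<nexists>c. HB = mat c)) \<and>
       U ** (tensor HA (mat 1) + tensor (mat 1) HB) ** adj U
         = tensor HA' (mat 1) + tensor (mat 1) HB')"

end

theory Submission
  imports Defs
begin

(* Take H_A = 0 and H_B = |beta><beta|; it remains to split Q = U (1 (x) |beta><beta|) U^dagger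
   as H_A' (x) 1 + 1 (x) H_B'. Since alpha is invertible, 1 (x) |beta><beta| is the orthogonal
   projection onto the range of alpha (x) |beta><beta|, so Q is the projection onto the range of
   alpha' (x) beta', i.e. the tensor product of the range projections of alpha' and beta'.
   On C^2 a density operator is either invertible (range projection 1) or a rank-one projection
   (its own range projection), and tr Q = 2 forces exactly one of the two factors to be 1. *)

lemma adj_adj [simp]: "adj (adj A) = A"
  by (simp add: adj_def vec_eq_iff)

lemma adj_mult: "adj (A ** B) = adj B ** adj A"
  by (simp add: adj_def matrix_matrix_mult_def vec_eq_iff mult.commute)

lemma adj_mat [simp]: "adj (mat c) = mat (cnj c)"
  by (simp add: adj_def mat_def vec_eq_iff)

lemma adj_tensor: "adj (tensor A B) = tensor (adj A) (adj B)"
  by (simp add: adj_def tensor_def vec_eq_iff)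

lemma hermitian_op_0: "hermitian_op 0"
  by (simp add: hermitian_op_def adj_def vec_eq_iff)

lemma hermitian_op_tensor: "hermitian_op A \<Longrightarrow> hermitian_op B \<Longrightarrow> hermitian_op (tensor A B)"
  by (simp add: hermitian_op_def adj_tensor)

lemma hermitian_op_unitary_conj: "hermitian_op A \<Longrightarrow> hermitian_op (U ** A ** adj U)"
  by (simp add: hermitian_op_def adj_mult matrix_mul_assoc)

lemma tensor_0_left [simp]: "tensor 0 B = 0"
  by (simp add: tensor_def vec_eq_iff)

lemma tensor_0_right [simp]: "tensor A 0 = 0"
  by (simp add: tensor_def vec_eq_iff)

lemma tensor_mult: "tensor A B ** tensor C D = tensor (A ** C) (B ** D)"
proof -
  have "(\<Sum>k\<in>UNIV. (A$fst i$fst k * B$snd i$snd k) * (C$fst k$fst j * D$snd k$snd j))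
     = (\<Sum>a\<in>UNIV. A$fst i$a * C$a$fst j) * (\<Sum>b\<in>UNIV. B$snd i$b * D$b$snd j)" for i j
    unfolding sum_product sum.cartesian_product UNIV_Times_UNIV[symmetric]
    by (rule sum.cong) (auto simp: mult_ac)
  then show ?thesis
    by (simp add: tensor_def matrix_matrix_mult_def vec_eq_iff)
qed

lemma trace_tensor: "trace (tensor A B) = trace A * trace B"
  unfolding trace_def tensor_def sum_product sum.cartesian_product UNIV_Times_UNIV[symmetric]
  by (rule sum.cong) auto

lemma trace_unitary_conj:
  assumes "unitary_op U"
  shows "trace (U ** A ** adj U) = trace A"
proof -
  have "trace (U ** A ** adj U) = trace (adj U ** (U ** A))"
    by (rule trace_mul_sym)
  also have "\<dots> = trace A"
    using assms unfolding unitary_op_def by (metis matrix_mul_assoc matrix_mul_lid)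
  finally show ?thesis .
qed

lemma matrix_2_cayley_hamilton:
  fixes A :: "'a::comm_ring_1^2^2"
  shows "A ** A + mat (det A) = mat (trace A) ** A"
  by (simp add: vec_eq_iff forall_2 matrix_matrix_mult_def sum_2 mat_def det_2 trace_def
      algebra_simps)

lemma density_op_2_invertible_or_idempotent:
  fixes A :: "complex^2^2"
  assumes "density_op A"
  shows "invertible A \<or> A ** A = A"
proof (cases "det A = 0")
  case True
  with assms show ?thesis
    using matrix_2_cayley_hamilton[of A] by (simp add: density_op_def)
next
  case False
  then show ?thesis by (simp add: invertible_det_nz)
qed

lemma hermitian_op_mult_swap:
  assumes "hermitian_op A" "hermitian_op S" "S ** A = A"
  shows "A ** S = A"
  using arg_cong[OF assms(3), of adj] assms(1,2) by (simp add: adj_mult hermitian_op_def)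

lemma unitary_op_adj_mult_cancel: "unitary_op U \<Longrightarrow> adj U ** (U ** X) = X"
  by (simp add: unitary_op_def matrix_mul_assoc)

(* S is the orthogonal projection onto the range of A, characterised without spectral theory:
   S is Hermitian, is the identity on the range of A, and its own range lies in that of A. *)
definition range_projection :: "complex^'n^'n \<Rightarrow> complex^'n^'n \<Rightarrow> bool" where
  "range_projection S A \<longleftrightarrow> hermitian_op S \<and> S ** A = A \<and> (\<exists>T. S = T ** A)"

lemma range_projection_unique:
  assumes "hermitian_op A" and S: "range_projection S A" and S': "range_projection S' A"
  shows "S = S'"
proof -
  obtain T T' where hS: "hermitian_op S" and hS': "hermitian_op S'"
    and SA: "S ** A = A" and S'A: "S' ** A = A" and T: "S = T ** A" and T': "S' = T' ** A"
    using S S' by (auto simp: range_projection_def)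
  have SS': "S ** S' = S"
    using hermitian_op_mult_swap[OF assms(1) hS' S'A] by (simp add: T matrix_mul_assoc[symmetric])
  have S'S: "S' ** S = S'"
    using hermitian_op_mult_swap[OF assms(1) hS SA] by (simp add: T' matrix_mul_assoc[symmetric])
  have "S = adj (S ** S')"
    using hS by (simp add: SS' hermitian_op_def)
  also have "\<dots> = S'"
    using hS hS' by (simp add: adj_mult S'S hermitian_op_def)
  finally show ?thesis .
qed

lemma range_projection_unitary_conj:
  assumes U: "unitary_op U" and "range_projection S A"
  shows "range_projection (U ** S ** adj U) (U ** A ** adj U)"
proof -
  obtain T where hS: "hermitian_op S" and SA: "S ** A = A" and T: "S = T ** A"
    using assms(2) by (auto simp: range_projection_def)
  have "(U ** S ** adj U) ** (U ** A ** adj U) = U ** (S ** A) ** adj U"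
    using U by (simp add: unitary_op_adj_mult_cancel matrix_mul_assoc[symmetric])
  moreover have "(U ** T ** adj U) ** (U ** A ** adj U) = U ** (T ** A) ** adj U"
    using U by (simp add: unitary_op_adj_mult_cancel matrix_mul_assoc[symmetric])
  ultimately show ?thesis
    using hermitian_op_unitary_conj[OF hS] unfolding range_projection_def SA T[symmetric]
    by metis
qed

lemma range_projection_tensor:
  assumes "range_projection S A" and "range_projection S' A'"
  shows "range_projection (tensor S S') (tensor A A')"
proof -
  obtain T T' where hS: "hermitian_op S" "hermitian_op S'"
    and SA: "S ** A = A" "S' ** A' = A'" and T: "S = T ** A" "S' = T' ** A'"
    using assms by (auto simp: range_projection_def)
  have "tensor S S' ** tensor A A' = tensor A A'"
    by (simp add: tensor_mult SA)
  moreover have "tensor S S' = tensor T T' ** tensor A A'"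
    by (simp add: tensor_mult T)
  ultimately show ?thesis
    using hermitian_op_tensor[OF hS] unfolding range_projection_def by blast
qed

lemma range_projection_invertible:
  assumes "invertible A"
  shows "range_projection (mat 1) A"
proof -
  obtain B where "B ** A = mat 1"
    using assms invertible_left_inverse by blast
  then show ?thesis
    unfolding range_projection_def hermitian_op_def by (metis adj_mat complex_cnj_one matrix_mul_lid)
qed

lemma range_projection_self:
  "hermitian_op A \<Longrightarrow> A ** A = A \<Longrightarrow> range_projection A A"
  unfolding range_projection_def by metis

lemma range_projection_density_op_2:
  fixes A :: "complex^2^2"
  assumes "density_op A"
  obtains "range_projection (mat 1) A" | "range_projection A A" "trace A = 1"
  using assms density_op_2_invertible_or_idempotent[OF assms]
  by (auto simp: density_op_def intro: range_projection_invertible range_projection_self)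

lemma range_projection_tensor_2_trace_2:
  fixes a b :: "complex^2^2"
  assumes "density_op a" "density_op b"
    and Q: "range_projection Q (tensor a b)" and "trace Q = 2"
  shows "\<exists>HA HB. hermitian_op HA \<and> hermitian_op HB \<and> Q = tensor HA (mat 1) + tensor (mat 1) HB"
proof -
  have herm: "hermitian_op a" "hermitian_op b"
    using assms(1,2) by (simp_all add: density_op_def)
  have Q_eq: "Q = tensor Sa Sb"
    if "range_projection Sa a" "range_projection Sb b" for Sa Sb
    using range_projection_unique[OF hermitian_op_tensor[OF herm] Q range_projection_tensor[OF that]] .
  have tr: "trace (mat 1 :: complex^2^2) = 2"
    by (simp add: trace_I)
  show ?thesis
  proof (cases rule: range_projection_density_op_2[OF assms(1)])
    case a: 1
    show ?thesis
    proof (cases rule: range_projection_density_op_2[OF assms(2)])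
      case 1
      with a Q_eq \<open>trace Q = 2\<close> show ?thesis
        by (simp add: trace_tensor tr)
    next
      case 2
      then have "Q = tensor 0 (mat 1) + tensor (mat 1) b"
        using Q_eq[OF a] by simp
      with herm hermitian_op_0 show ?thesis
        by blast
    qed
  next
    case a: 2
    show ?thesis
    proof (cases rule: range_projection_density_op_2[OF assms(2)])
      case 1
      then have "Q = tensor a (mat 1) + tensor (mat 1) 0"
        using Q_eq[OF a(1)] by simp
      with herm hermitian_op_0 show ?thesis
        by blast
    next
      case 2
      with a Q_eq \<open>trace Q = 2\<close> show ?thesis
        by (simp add: trace_tensor)
    qed
  qed
qed

lemma unit_vec_sum_cnj:
  assumes "unit_vec v"
  shows "(\<Sum>i\<in>UNIV. v$i * cnj (v$i)) = 1"
proof -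
  have "(\<Sum>i\<in>UNIV. v$i * cnj (v$i)) = (\<Sum>i\<in>UNIV. of_real ((cmod (v$i))^2))"
    by (rule sum.cong) (simp_all only: complex_norm_square)
  with assms show ?thesis
    unfolding unit_vec_def by (metis of_real_1 of_real_sum)
qed

lemma hermitian_op_ket_bra: "hermitian_op (ket_bra v)"
  by (simp add: hermitian_op_def ket_bra_def adj_def vec_eq_iff)

lemma trace_ket_bra: "unit_vec v \<Longrightarrow> trace (ket_bra v) = 1"
  using unit_vec_sum_cnj by (simp add: ket_bra_def trace_def)

lemma ket_bra_idempotent:
  assumes "unit_vec v"
  shows "ket_bra v ** ket_bra v = ket_bra v"
proof -
  have "(\<Sum>k\<in>UNIV. v$i * cnj (v$k) * (v$k * cnj (v$j)))
      = v$i * cnj (v$j) * (\<Sum>k\<in>UNIV. v$k * cnj (v$k))" for i j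
    by (simp add: sum_distrib_left mult_ac)
  then show ?thesis
    using unit_vec_sum_cnj[OF assms]
    by (simp add: ket_bra_def matrix_matrix_mult_def vec_eq_iff)
qed

lemma ket_bra_not_scalar:
  fixes v :: "complex^'n"
  assumes "unit_vec v" and "CARD('n) \<ge> 2"
  shows "ket_bra v \<noteq> mat c"
proof
  assume P: "ket_bra v = mat c"
  have "\<exists>i. v$i \<noteq> 0"
  proof (rule ccontr)
    assume "\<nexists>i. v$i \<noteq> 0"
    then have "(\<Sum>i\<in>UNIV. v$i * cnj (v$i)) = 0"
      by simp
    with unit_vec_sum_cnj[OF assms(1)] show False
      by simp
  qed
  then obtain i where vi: "v$i \<noteq> 0"
    by blast
  have "\<not> CARD('n) \<le> Suc 0"
    using assms(2) by simp
  then obtain a b :: 'n where "a \<noteq> b"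
    by (auto simp: card_le_Suc0_iff_eq)
  then obtain j where "j \<noteq> i"
    by metis
  then have "v$i * cnj (v$j) = 0" "v$j * cnj (v$j) = c" "v$i * cnj (v$i) = c"
    using arg_cong[OF P, of "\<lambda>A. A$i$j"] arg_cong[OF P, of "\<lambda>A. A$j$j"]
      arg_cong[OF P, of "\<lambda>A. A$i$i"]
    by (simp_all add: ket_bra_def mat_def)
  with vi show False
    by auto
qed

theorem theorem8:
  fixes U :: "complex^(2 \<times> 2)^(2 \<times> 2)"
    and \<alpha> :: "complex^2^2" and \<beta> :: "complex^2"
  assumes "unitary_op U"
    and "density_op \<alpha>" and "full_rank \<alpha>"
    and "unit_vec \<beta>"
    and "\<exists>\<alpha>' \<beta>'. density_op \<alpha>' \<and> density_op \<beta>' \<and>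
           U ** tensor \<alpha> (ket_bra \<beta>) ** adj U = tensor \<alpha>' \<beta>'"
  shows "gen_thermal_unitary U"
proof -
  obtain \<alpha>' \<beta>' where "density_op \<alpha>'" "density_op \<beta>'"
    and N: "U ** tensor \<alpha> (ket_bra \<beta>) ** adj U = tensor \<alpha>' \<beta>'"
    using assms(5) by blast
  define Q where "Q = U ** tensor (mat 1) (ket_bra \<beta>) ** adj U"
  have "range_projection (tensor (mat 1) (ket_bra \<beta>)) (tensor \<alpha> (ket_bra \<beta>))"
    using assms(3,4) by (intro range_projection_tensor range_projection_invertible
        range_projection_self) (simp_all add: full_rank_def hermitian_op_ket_bra ket_bra_idempotent)
  then have "range_projection Q (tensor \<alpha>' \<beta>')"
    unfolding Q_def N[symmetric] by (rule range_projection_unitary_conj[OF assms(1)])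
  moreover have "trace Q = 2"
    using assms(1,4) by (simp add: Q_def trace_unitary_conj trace_tensor trace_I trace_ket_bra)
  ultimately obtain HA' HB' where "hermitian_op HA'" "hermitian_op HB'"
    and "Q = tensor HA' (mat 1) + tensor (mat 1) HB'"
    using range_projection_tensor_2_trace_2 \<open>density_op \<alpha>'\<close> \<open>density_op \<beta>'\<close> by blast
  moreover have "U ** (tensor 0 (mat 1) + tensor (mat 1) (ket_bra \<beta>)) ** adj U = Q"
    by (simp add: Q_def)
  moreover have "\<nexists>c. ket_bra \<beta> = mat c"
    using ket_bra_not_scalar[OF assms(4)] by simp
  ultimately show ?thesis
    unfolding gen_thermal_unitary_def using assms(1) hermitian_op_0 hermitian_op_ket_bra by blast
qed

end
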